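(* For $n\ge1$ let $\Gamma_n(x):=\sum_{k=0}^{\lfloor\frac{n-1}{2}\rfloor}\gamma_{n,k}^Sx^k$, where the integers $\gamma^S_{n,k}$ are defined by $$\sum_{\pi\in\mathfrak{S}_n(2413,3142)}t^{\mathrm{des}(\pi)}=\sum_{k=0}^{\lfloor\frac{n-1}{2}\rfloor}\gamma_{n,k}^S\, t^k (1+t)^{n-1-2k}.$$ Then $\Gamma_1(x)=1$ and for $n\ge2$, $$\Gamma_n(x)=\Gamma_{n-1}(x)+x\sum_{j=1}^{n-2}\Gamma_j(x)\biggl(\Gamma_{n-j-1}(x)+\sum_{i=1}^{n-j-1}\Gamma_i(x)\Gamma_{n-j-i}(x)\biggr).$$
   Context: $\mathfrak{S}_n(2413,3142)$ is the set of permutations of $[n]$ avoiding the patterns $2413$ and $3142$; $\mathrm{des}(\pi)=\#\{i\in[n-1]:\pi_i>\pi_{i+1}\}$. *)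

theory Defs
  imports "HOL-Combinatorics.Multiset_Permutations" "HOL-Computational_Algebra.Polynomial"
begin

text \<open>Permutations of [n] in one-line notation: lists p with p ! (i-1) = pi_i.\<close>

definition contains_pattern :: "nat list \<Rightarrow> nat list \<Rightarrow> bool" where
  "contains_pattern p sigma \<longleftrightarrow>
     (\<exists>is :: nat list. length is = length sigma \<and> sorted_wrt (<) is \<and>
        (\<forall>i\<in>set is. i < length p) \<and>
        (\<forall>a b. a < length sigma \<longrightarrow> b < length sigma \<longrightarrow>
            (p ! (is ! a) < p ! (is ! b) \<longleftrightarrow> sigma ! a < sigma ! b)))"

definition avoiders :: "nat \<Rightarrow> nat list set" where
  "avoiders n = {p \<in> permutations_of_set {1..n}.
      \<not> contains_pattern p [2,4,1,3] \<and> \<not> contains_pattern p [3,1,4,2]}"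

definition des :: "nat list \<Rightarrow> nat" where
  "des p = card {i. i + 1 < length p \<and> p ! i > p ! (i + 1)}"

definition des_poly :: "nat \<Rightarrow> int poly" where
  "des_poly n = (\<Sum>p\<in>avoiders n. monom 1 (des p))"

definition is_gamma_coeffs :: "(nat \<Rightarrow> nat \<Rightarrow> int) \<Rightarrow> bool" where
  "is_gamma_coeffs g \<longleftrightarrow> (\<forall>n\<ge>1.
     des_poly n = (\<Sum>k\<le>(n - 1) div 2.
        smult (g n k) ([:0, 1:] ^ k * [:1, 1:] ^ (n - 1 - 2 * k))))"

definition Gamma :: "(nat \<Rightarrow> nat \<Rightarrow> int) \<Rightarrow> nat \<Rightarrow> int poly" where
  "Gamma g n = (\<Sum>k\<le>(n - 1) div 2. monom (g n k) k)"

end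

theory Submission
  imports Defs "HOL-Computational_Algebra.Formal_Power_Series"
begin

(* A permutation of length at least 2 avoiding 2413 and 3142 is a direct or a skew sum of two
   smaller such permutations, and cutting at the first possible place makes the decomposition unique,
   with a first summand that is not itself a sum of the same kind.  A skew sum creates exactly one
   new descent.  Hence A(x) = sum_{n>=1} A_n(t) x^n, with A_n the descent polynomial, satisfies
   A = x + D + S, D = (x + S) A, S = t (x + D) A, where D and S collect direct and skew sums, so
   A = x + (1 + t) x A + t x A^2 + t A^3.  Writing A_n(t) = (1 + t)^(n-1) G_n(t / (1 + t)^2), the
   cubic becomes the stated recurrence for G_n; the gamma-coefficients are unique because
   t / (1 + t)^2 is injective on [0, 1). *)

section \<open>The patterns 2413 and 3142\<close>

text \<open>The flag \<open>r\<close> of \<open>less_by\<close> reverses the order of values when it is \<open>True\<close>. Accordingly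
  \<open>has_2413 True\<close> detects 3142, and \<open>sum_split True\<close>, \<open>perm_sum True\<close> are about skew sums,
  while \<open>r = False\<close> gives direct sums.\<close>

definition less_by :: "bool \<Rightarrow> nat \<Rightarrow> nat \<Rightarrow> bool" where
  "less_by r x y \<longleftrightarrow> (if r then y < x else x < y)"

lemma less_by_trans: "less_by r x y \<Longrightarrow> less_by r y z \<Longrightarrow> less_by r x z"
  unfolding less_by_def by (auto split: if_splits)

lemma less_by_asym: "less_by r x y \<Longrightarrow> \<not> less_by r y x"
  unfolding less_by_def by (auto split: if_splits)

lemma less_by_linear: "x \<noteq> y \<Longrightarrow> less_by r x y \<or> less_by r y x"
  unfolding less_by_def by auto

lemma less_by_Not [simp]: "less_by (\<not> r) x y \<longleftrightarrow> less_by r y x"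
  unfolding less_by_def by auto

lemma less_by_strict_mono: "strict_mono f \<Longrightarrow> less_by r (f x) (f y) \<longleftrightarrow> less_by r x y"
  unfolding less_by_def by (simp add: strict_mono_less)

lemma less_by_opposite:
  "less_by s x y \<Longrightarrow> less_by s x z \<Longrightarrow> less_by r y x \<Longrightarrow> less_by r x z \<Longrightarrow> False"
  unfolding less_by_def by (auto split: if_splits)

definition has_2413 :: "bool \<Rightarrow> nat list \<Rightarrow> bool" where
  "has_2413 r xs \<longleftrightarrow> (\<exists>a b c d. a < b \<and> b < c \<and> c < d \<and> d < length xs \<and>
     less_by r (xs ! c) (xs ! a) \<and> less_by r (xs ! a) (xs ! d) \<and> less_by r (xs ! d) (xs ! b))"

definition avoids_2413_3142 :: "nat list \<Rightarrow> bool" where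
  "avoids_2413_3142 xs \<longleftrightarrow> (\<forall>r. \<not> has_2413 r xs)"

abbreviation perms :: "nat \<Rightarrow> nat list set" where
  "perms n \<equiv> permutations_of_set {1..n}"

lemma length_perms: "p \<in> perms n \<Longrightarrow> length p = n"
  using length_finite_permutations_of_set by fastforce

lemma contains_pattern_length_4:
  "contains_pattern p [w, x, y, z] \<longleftrightarrow> (\<exists>a b c d. a < b \<and> b < c \<and> c < d \<and> d < length p \<and>
     (\<forall>i<4. \<forall>j<4. p ! ([a, b, c, d] ! i) < p ! ([a, b, c, d] ! j) \<longleftrightarrow>
        [w, x, y, z] ! i < [w, x, y, z] ! j))" (is "_ \<longleftrightarrow> ?rhs")
proof
  assume "contains_pattern p [w, x, y, z]"
  then obtain "is" where len: "length is = 4" and "sorted_wrt (<) is" "\<forall>i\<in>set is. i < length p"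
    and "\<forall>i<4. \<forall>j<4. p ! (is ! i) < p ! (is ! j) \<longleftrightarrow> [w, x, y, z] ! i < [w, x, y, z] ! j"
    unfolding contains_pattern_def by (auto simp: numeral_eq_Suc)
  moreover obtain a b c d where "is = [a, b, c, d]"
    using len by (auto simp: length_Suc_conv numeral_eq_Suc)
  ultimately show ?rhs by auto
next
  assume ?rhs
  then obtain a b c d where "a < b" "b < c" "c < d" "d < length p"
    and "\<forall>i<4. \<forall>j<4. p ! ([a, b, c, d] ! i) < p ! ([a, b, c, d] ! j) \<longleftrightarrow> [w, x, y, z] ! i < [w, x, y, z] ! j"
    by blast
  then show "contains_pattern p [w, x, y, z]"
    unfolding contains_pattern_def by (intro exI[of _ "[a, b, c, d]"]) (auto simp: numeral_eq_Suc)
qed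

lemma order_type_2413:
  "(\<forall>i<4. \<forall>j<4. f ([a, b, c, d] ! i) < f ([a, b, c, d] ! j) \<longleftrightarrow> [2, 4, 1, 3 :: nat] ! i < [2, 4, 1, 3] ! j)
    \<longleftrightarrow> f c < f a \<and> f a < f d \<and> f d < (f b :: nat)"
  by (auto simp: numeral_eq_Suc All_less_Suc)

lemma order_type_3142:
  "(\<forall>i<4. \<forall>j<4. f ([a, b, c, d] ! i) < f ([a, b, c, d] ! j) \<longleftrightarrow> [3, 1, 4, 2 :: nat] ! i < [3, 1, 4, 2] ! j)
    \<longleftrightarrow> f b < f d \<and> f d < f a \<and> f a < (f c :: nat)"
  by (auto simp: numeral_eq_Suc All_less_Suc)

lemma avoiders_eq: "avoiders n = {p \<in> perms n. avoids_2413_3142 p}"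
proof -
  have "contains_pattern p [2, 4, 1, 3] \<longleftrightarrow> has_2413 False p"
    and "contains_pattern p [3, 1, 4, 2] \<longleftrightarrow> has_2413 True p" for p
    unfolding contains_pattern_length_4 order_type_2413 order_type_3142 has_2413_def less_by_def
    by auto
  then show ?thesis
    unfolding avoiders_def avoids_2413_3142_def all_bool_eq by auto
qed

lemma has_2413_embed:
  assumes "has_2413 r xs" "strict_mono f" "\<And>i. i < length xs \<Longrightarrow> f i < length ys \<and> ys ! f i = xs ! i"
  shows "has_2413 r ys"
proof -
  obtain a b c d where "a < b" "b < c" "c < d" "d < length xs"
    "less_by r (xs ! c) (xs ! a)" "less_by r (xs ! a) (xs ! d)" "less_by r (xs ! d) (xs ! b)"
    using assms(1) unfolding has_2413_def by blast
  with assms(2,3) show ?thesis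
    unfolding has_2413_def
    by (intro exI[of _ "f a"] exI[of _ "f b"] exI[of _ "f c"] exI[of _ "f d"]) (simp add: strict_mono_less)
qed

lemma has_2413_append_left: "has_2413 r xs \<Longrightarrow> has_2413 r (xs @ ys)"
  by (erule has_2413_embed[where f = id]) (auto simp: strict_mono_def nth_append)

lemma has_2413_append_right: "has_2413 r ys \<Longrightarrow> has_2413 r (xs @ ys)"
  by (erule has_2413_embed[where f = "\<lambda>i. length xs + i"]) (auto simp: strict_mono_def nth_append)

lemma has_2413_map_strict_mono:
  "strict_mono f \<Longrightarrow> has_2413 r (map f xs) \<longleftrightarrow> has_2413 r xs"
  unfolding has_2413_def by (simp add: less_by_strict_mono cong: conj_cong)

section \<open>Avoiders are direct or skew sums\<close>

definition sum_split :: "bool \<Rightarrow> nat list \<Rightarrow> nat \<Rightarrow> bool" where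
  "sum_split r xs k \<longleftrightarrow> 0 < k \<and> k < length xs \<and>
     (\<forall>i j. i < k \<longrightarrow> k \<le> j \<longrightarrow> j < length xs \<longrightarrow> less_by r (xs ! i) (xs ! j))"

lemma sum_split_ends: "sum_split r xs k \<Longrightarrow> less_by r (xs ! 0) (xs ! (length xs - 1))"
  unfolding sum_split_def by (elim conjE allE[of _ 0] allE[of _ "length xs - 1"]) auto

lemma sum_split_not_both: "sum_split r xs k \<Longrightarrow> \<not> sum_split (\<not> r) xs k'"
  using sum_split_ends less_by_asym less_by_Not by blast

lemma has_2413_sum_split:
  assumes split: "sum_split s xs k" and "has_2413 r xs"
  shows "has_2413 r (take k xs) \<or> has_2413 r (drop k xs)"
proof -
  obtain a b c d where idx: "a < b" "b < c" "c < d" "d < length xs"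
    and ord: "less_by r (xs ! c) (xs ! a)" "less_by r (xs ! a) (xs ! d)" "less_by r (xs ! d) (xs ! b)"
    using assms(2) unfolding has_2413_def by blast
  have across: "less_by s (xs ! i) (xs ! j)" if "i < k" "k \<le> j" "j < length xs" for i j
    using split that unfolding sum_split_def by blast
  consider "d < k" | "k \<le> a" | "a < k" "k \<le> c" | "c < k" "k \<le> d"
    by linarith
  then show ?thesis
  proof cases
    case 1
    with idx ord show ?thesis unfolding has_2413_def
      by (intro disjI1 exI[of _ a] exI[of _ b] exI[of _ c] exI[of _ d]) simp
  next
    case 2
    have shift: "drop k xs ! (i - k) = xs ! i" if "i \<in> {a, b, c, d}" for i
      using 2 idx that by auto
    have "has_2413 r (drop k xs)"
      unfolding has_2413_def
    proof (intro exI conjI)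
      show "a - k < b - k" "b - k < c - k" "c - k < d - k" "d - k < length (drop k xs)"
        using 2 idx by auto
    qed (use ord shift in auto)
    then show ?thesis ..
  next
    \<comment> \<open>A cut inside the occurrence orders two pairs of its entries in opposite ways.\<close>
    case 3
    then have "less_by s (xs ! a) (xs ! c)" "less_by s (xs ! a) (xs ! d)"
      using idx by (auto intro: across)
    with ord show ?thesis using less_by_opposite by blast
  next
    case 4
    then have "less_by (\<not> s) (xs ! d) (xs ! a)" "less_by (\<not> s) (xs ! d) (xs ! b)"
      using idx by (auto intro: across)
    with ord show ?thesis using less_by_opposite by blast
  qed
qed

lemma sum_split_snoc_not_interleaved:
  assumes distinct: "distinct (ys @ [v])" and "ys \<noteq> []"
    and no_interleaving:
      "\<And>i j. i < j \<Longrightarrow> j < length ys \<Longrightarrow> \<not> (less_by s v (ys ! i) \<and> less_by s (ys ! j) v)"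
  shows "\<exists>r k. sum_split r (ys @ [v]) k"
proof (cases "\<forall>i < length ys. less_by s v (ys ! i)")
  case True
  then have "sum_split (\<not> s) (ys @ [v]) (length ys)"
    using \<open>ys \<noteq> []\<close> unfolding sum_split_def by (auto simp: nth_append)
  then show ?thesis by blast
next
  case False
  define n where "n = length ys"
  define m where "m = (LEAST i. i = n \<or> less_by s v (ys ! i))"
  have "m \<le> n"
    unfolding m_def by (rule Least_le) simp
  have m_above: "m = n \<or> less_by s v (ys ! m)"
    unfolding m_def by (rule LeastI[of _ n]) simp
  have comparable: "less_by s (ys ! i) v \<or> less_by s v (ys ! i)" if "i < n" for i
  proof -
    have "ys ! i \<noteq> v" using distinct nth_mem[of i ys] that unfolding n_def by auto
    then show ?thesis using less_by_linear by blast
  qed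
  have below: "less_by s (ys ! i) v" if "i < m" for i
    using not_less_Least[OF that[unfolded m_def]] comparable[of i] that \<open>m \<le> n\<close> by auto
  have above: "less_by s v (ys ! j)" if "m \<le> j" "j < n" for j
  proof (rule ccontr)
    assume "\<not> less_by s v (ys ! j)"
    then have "less_by s (ys ! j) v" using comparable that(2) by blast
    moreover have "less_by s v (ys ! m)" using m_above that by auto
    ultimately have "m < j" using that(1) less_by_asym by (cases "m = j") auto
    with no_interleaving \<open>less_by s (ys ! j) v\<close> \<open>less_by s v (ys ! m)\<close> that(2) show False
      unfolding n_def by blast
  qed
  have "0 < m"
    using False above unfolding n_def by (metis gr0I le0)
  have "sum_split s (ys @ [v]) m"
    unfolding sum_split_def
  proof (intro conjI allI impI)
    show "0 < m" "m < length (ys @ [v])" using \<open>0 < m\<close> \<open>m \<le> n\<close> unfolding n_def by auto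
  next
    fix i j assume "i < m" "m \<le> j" "j < length (ys @ [v])"
    then show "less_by s ((ys @ [v]) ! i) ((ys @ [v]) ! j)"
      using below above \<open>m \<le> n\<close> unfolding n_def
      by (cases "j < n") (auto simp: nth_append n_def intro: less_by_trans)
  qed
  then show ?thesis by blast
qed

lemma sum_split_snoc_interleaved:
  assumes split: "sum_split s ys k"
    and ij: "i < j" "j < length ys" "less_by s v (ys ! i)" "less_by s (ys ! j) v"
  shows "has_2413 (\<not> s) (ys @ [v]) \<or> sum_split s (ys @ [v]) k"
proof (cases "j < k")
  case True
  with split ij have "less_by s (ys ! i) (ys ! k)" "k < length ys"
    unfolding sum_split_def by auto
  with True ij have "has_2413 (\<not> s) (ys @ [v])"
    unfolding has_2413_def
    by (intro exI[of _ i] exI[of _ j] exI[of _ k] exI[of _ "length ys"]) (simp add: nth_append)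
  then show ?thesis ..
next
  case False
  have "sum_split s (ys @ [v]) k"
    unfolding sum_split_def
  proof (intro conjI allI impI)
    show "0 < k" "k < length (ys @ [v])"
      using split unfolding sum_split_def by auto
  next
    fix i' j' assume "i' < k" "k \<le> j'" "j' < length (ys @ [v])"
    moreover have "less_by s (ys ! i') v" if "i' < k"
      using split False ij that less_by_trans unfolding sum_split_def by (meson not_less)
    ultimately show "less_by s ((ys @ [v]) ! i') ((ys @ [v]) ! j')"
      using split unfolding sum_split_def by (cases "j' < length ys") (auto simp: nth_append)
  qed
  then show ?thesis ..
qed

lemma avoider_sum_split:
  "distinct xs \<Longrightarrow> 2 \<le> length xs \<Longrightarrow> avoids_2413_3142 xs \<Longrightarrow> \<exists>r k. sum_split r xs k"
proof (induction xs rule: rev_induct)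
  case Nil
  then show ?case by simp
next
  case (snoc v ys)
  have "ys \<noteq> []"
    using snoc.prems(2) by auto
  show ?case
  proof (cases "length ys = 1")
    case True
    then show ?thesis
      using sum_split_snoc_not_interleaved[OF snoc.prems(1) \<open>ys \<noteq> []\<close>, where s = False] by auto
  next
    case False
    then obtain s k where split: "sum_split s ys k"
      using snoc has_2413_append_left unfolding avoids_2413_3142_def by fastforce
    show ?thesis
    proof (cases "\<exists>i j. i < j \<and> j < length ys \<and> less_by s v (ys ! i) \<and> less_by s (ys ! j) v")
      case True
      then show ?thesis
        using sum_split_snoc_interleaved[OF split] snoc.prems(3)
        unfolding avoids_2413_3142_def by blast
    next
      case False
      with \<open>ys \<noteq> []\<close> show ?thesis
        using sum_split_snoc_not_interleaved[OF snoc.prems(1)] by blast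
    qed
  qed
qed

section \<open>Direct and skew sums of permutations\<close>

definition perm_sum :: "bool \<Rightarrow> nat list \<Rightarrow> nat list \<Rightarrow> nat list" where
  "perm_sum r x y =
     (if r then map (\<lambda>v. v + length y) x @ y else x @ map (\<lambda>v. v + length x) y)"

lemma length_perm_sum [simp]: "length (perm_sum r x y) = length x + length y"
  unfolding perm_sum_def by simp

lemma perm_sum_eq_append:
  "perm_sum r x y = map (\<lambda>v. v + of_bool r * length y) x @ map (\<lambda>v. v + of_bool (\<not> r) * length x) y"
  unfolding perm_sum_def by simp

lemma perm_sum_inj:
  assumes "length x = length x'" "length y = length y'" "perm_sum r x y = perm_sum r x' y'"
  shows "x = x' \<and> y = y'"
  using assms unfolding perm_sum_eq_append by (simp add: inj_on_def)

lemma permutations_of_set_shift: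
  "permutations_of_set {1 + c..m + c} = map (\<lambda>v. v + c) ` perms m"
  using permutations_of_set_image_inj[of "\<lambda>v. v + c" "{1..m}"] by (simp add: inj_on_def)

lemma append_permutations_of_set:
  "xs \<in> permutations_of_set A \<Longrightarrow> ys \<in> permutations_of_set B \<Longrightarrow> A \<inter> B = {} \<Longrightarrow>
   xs @ ys \<in> permutations_of_set (A \<union> B)"
  unfolding permutations_of_set_def by auto

lemma perm_sum_perms:
  assumes x: "x \<in> perms m" and y: "y \<in> perms l"
  shows "perm_sum r x y \<in> perms (m + l)"
proof -
  have lengths: "length x = m" "length y = l"
    using x y by (simp_all add: length_perms)
  show ?thesis
  proof (cases r)
    case True
    have "map (\<lambda>v. v + l) x \<in> permutations_of_set {1 + l..m + l}"
      using x permutations_of_set_shift by blast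
    moreover have "{1 + l..m + l} \<union> {1..l} = {1..m + l}" by auto
    ultimately show ?thesis
      using append_permutations_of_set[OF _ y] True lengths unfolding perm_sum_def by fastforce
  next
    case False
    have "map (\<lambda>v. v + m) y \<in> permutations_of_set {1 + m..l + m}"
      using y permutations_of_set_shift by blast
    moreover have "{1..m} \<union> {1 + m..l + m} = {1..m + l}" by auto
    ultimately show ?thesis
      using append_permutations_of_set[OF x] False lengths unfolding perm_sum_def by fastforce
  qed
qed

lemma sum_split_perm_sum:
  assumes x: "x \<in> perms m" and y: "y \<in> perms l" and "0 < m" "0 < l"
  shows "sum_split r (perm_sum r x y) m"
proof -
  have lengths: "length x = m" "length y = l"
    using x y by (simp_all add: length_perms)
  show ?thesis
    unfolding sum_split_def
  proof (intro conjI allI impI)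
    show "0 < m" "m < length (perm_sum r x y)" using assms lengths by auto
  next
    fix i j assume ij: "i < m" "m \<le> j" "j < length (perm_sum r x y)"
    then have "x ! i \<in> {1..m}" "y ! (j - m) \<in> {1..l}"
      using x y lengths nth_mem permutations_of_setD(1) by fastforce+
    with ij lengths show "less_by r (perm_sum r x y ! i) (perm_sum r x y ! j)"
      unfolding perm_sum_def less_by_def by (auto simp: nth_append)
  qed
qed

lemma has_2413_perm_sum:
  assumes "x \<in> perms m" "y \<in> perms l" "0 < m" "0 < l"
  shows "has_2413 q (perm_sum r x y) \<longleftrightarrow> has_2413 q x \<or> has_2413 q y"
proof
  have shift: "strict_mono (\<lambda>v. v + c)" for c :: nat
    by (simp add: strict_mono_def)
  have "length x = m"
    using assms(1) by (rule length_perms)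
  then have "take m (perm_sum r x y) = map (\<lambda>v. v + of_bool r * length y) x"
    and "drop m (perm_sum r x y) = map (\<lambda>v. v + of_bool (\<not> r) * length x) y"
    unfolding perm_sum_eq_append by simp_all
  moreover assume "has_2413 q (perm_sum r x y)"
  then have "has_2413 q (take m (perm_sum r x y)) \<or> has_2413 q (drop m (perm_sum r x y))"
    by (rule has_2413_sum_split[OF sum_split_perm_sum[OF assms]])
  ultimately show "has_2413 q x \<or> has_2413 q y"
    by (simp add: has_2413_map_strict_mono[OF shift])
next
  have shift: "strict_mono (\<lambda>v. v + c)" for c :: nat
    by (simp add: strict_mono_def)
  assume "has_2413 q x \<or> has_2413 q y"
  then show "has_2413 q (perm_sum r x y)"
    unfolding perm_sum_eq_append
    by (auto simp: has_2413_map_strict_mono[OF shift] intro: has_2413_append_left has_2413_append_right)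
qed

lemma avoids_perm_sum:
  assumes "x \<in> perms m" "y \<in> perms l" "0 < m" "0 < l"
  shows "avoids_2413_3142 (perm_sum r x y) \<longleftrightarrow> avoids_2413_3142 x \<and> avoids_2413_3142 y"
  using has_2413_perm_sum[OF assms] unfolding avoids_2413_3142_def by blast

lemma des_Cons_Cons: "des (a # b # xs) = of_bool (b < a) + des (b # xs)"
proof -
  let ?S = "{i. i + 1 < length (b # xs) \<and> (b # xs) ! (i + 1) < (b # xs) ! i}"
  have "{i. i + 1 < length (a # b # xs) \<and> (a # b # xs) ! (i + 1) < (a # b # xs) ! i} =
      {i. i = 0 \<and> b < a} \<union> Suc ` ?S"
    by (rule set_eqI) (case_tac x; auto)
  moreover have "finite ?S"
    by (rule finite_subset[of _ "{..<length (b # xs)}"]) auto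
  ultimately show ?thesis
    unfolding des_def by (simp add: card_Un_disjoint card_image)
qed

lemma des_Nil [simp]: "des [] = 0"
  and des_singleton [simp]: "des [a] = 0"
  unfolding des_def by simp_all

lemma des_append:
  "des (xs @ ys) = des xs + des ys + of_bool (xs \<noteq> [] \<and> ys \<noteq> [] \<and> hd ys < last xs)"
proof (induction xs)
  case Nil
  then show ?case by simp
next
  case (Cons x xs)
  then show ?case by (cases xs; cases ys) (auto simp: des_Cons_Cons)
qed

lemma des_map_strict_mono: "strict_mono f \<Longrightarrow> des (map f xs) = des xs"
  unfolding des_def by (simp add: strict_mono_less cong: conj_cong)

lemma des_perm_sum:
  assumes x: "x \<in> perms m" and y: "y \<in> perms l" and "0 < m" "0 < l"
  shows "des (perm_sum r x y) = des x + des y + of_bool r"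
proof -
  have lengths: "length x = m" "length y = l"
    using x y by (simp_all add: length_perms)
  then have "x \<noteq> []" "y \<noteq> []" using assms by auto
  then have "last x \<in> {1..m}" "hd y \<in> {1..l}"
    using x y permutations_of_setD(1) by fastforce+
  moreover have "strict_mono (\<lambda>v. v + c)" for c :: nat
    by (simp add: strict_mono_def)
  ultimately show ?thesis
    using \<open>x \<noteq> []\<close> \<open>y \<noteq> []\<close> lengths
    unfolding perm_sum_def by (auto simp: des_append des_map_strict_mono last_map hd_map)
qed

lemma lower_part_eq:
  assumes "A \<union> B = {1..n}" "A \<inter> B = {}" "\<forall>a\<in>A. \<forall>b\<in>B. a < b"
  shows "A = {1..card A}"
proof (rule card_subset_eq)
  have "finite A"
    using assms(1) finite_subset[of A "{1..n}"] by blast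
  have "a \<le> card A" if "a \<in> A" for a
  proof -
    have "{1..a} \<subseteq> A"
    proof
      fix x assume x: "x \<in> {1..a}"
      moreover have "a \<le> n"
        using assms(1) that by auto
      ultimately have "x \<in> A \<union> B"
        using assms(1) by auto
      moreover have "x \<notin> B"
        using assms(3) that x by force
      ultimately show "x \<in> A" by blast
    qed
    then have "card {1..a} \<le> card A"
      by (rule card_mono[OF \<open>finite A\<close>])
    then show ?thesis by simp
  qed
  moreover have "A \<subseteq> {1..n}"
    using assms(1) by blast
  ultimately show "A \<subseteq> {1..card A}"
    by auto
qed auto

lemma sum_split_blocks:
  assumes p: "p \<in> perms n" and split: "sum_split r p k"
  shows "set (take k p) = (if r then {1 + (n - k)..k + (n - k)} else {1..k})"
    and "set (drop k p) = (if r then {1..n - k} else {1 + k..(n - k) + k})"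
proof -
  have "length p = n"
    using p by (rule length_perms)
  with split have k: "0 < k" "k < n"
    unfolding sum_split_def by auto
  define A B where "A = set (take k p)" and "B = set (drop k p)"
  have AB: "A \<union> B = {1..n}" "A \<inter> B = {}"
    using permutations_of_setD[OF p] set_take_disj_set_drop_if_distinct[of p k k]
    unfolding A_def B_def by (metis set_append append_take_drop_id, simp)
  have card: "card A = k" "card B = n - k"
    using permutations_of_setD(2)[OF p] \<open>length p = n\<close> k unfolding A_def B_def
    by (simp_all add: distinct_card)
  have across: "less_by r a b" if ab: "a \<in> A" "b \<in> B" for a b
  proof -
    obtain i j where "i < length (take k p)" "take k p ! i = a" "j < length (drop k p)" "drop k p ! j = b"
      using ab unfolding A_def B_def in_set_conv_nth by blast
    then show ?thesis
      using split \<open>length p = n\<close> unfolding sum_split_def by force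
  qed
  have "A = (if r then {1 + (n - k)..k + (n - k)} else {1..k}) \<and>
      B = (if r then {1..n - k} else {1 + k..(n - k) + k})"
  proof (cases r)
    case False
    then have "A = {1..k}"
      using lower_part_eq[OF AB] across card unfolding less_by_def by simp
    moreover from this have "B = {1..n} - {1..k}"
      using AB by blast
    moreover have "{1..n} - {1..k} = {1 + k..(n - k) + k}"
      using k by auto
    ultimately show ?thesis
      using False by simp
  next
    case True
    have BA: "B \<union> A = {1..n}" "B \<inter> A = {}"
      using AB by auto
    have "B = {1..n - k}"
      using lower_part_eq[OF BA] across card True unfolding less_by_def by simp
    moreover from this have "A = {1..n} - {1..n - k}"
      using AB by blast
    moreover have "{1..n} - {1..n - k} = {1 + (n - k)..k + (n - k)}"
      using k by auto
    ultimately show ?thesis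
      using True by simp
  qed
  then show "set (take k p) = (if r then {1 + (n - k)..k + (n - k)} else {1..k})"
    and "set (drop k p) = (if r then {1..n - k} else {1 + k..(n - k) + k})"
    unfolding A_def B_def by simp_all
qed

lemma perm_sum_decompose:
  assumes p: "p \<in> perms n" and split: "sum_split r p k"
  shows "\<exists>x y. x \<in> perms k \<and> y \<in> perms (n - k) \<and> p = perm_sum r x y"
proof -
  have "length p = n"
    using p by (rule length_perms)
  with split have "k < n"
    unfolding sum_split_def by auto
  have parts: "take k p \<in> permutations_of_set (set (take k p))"
    "drop k p \<in> permutations_of_set (set (drop k p))"
    using permutations_of_setD(2)[OF p] unfolding permutations_of_set_def by simp_all
  show ?thesis
  proof (cases r)
    case False
    then obtain y where y: "y \<in> perms (n - k)" "drop k p = map (\<lambda>v. v + k) y"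
      using parts(2) sum_split_blocks(2)[OF p split] permutations_of_set_shift by auto
    have "perm_sum False (take k p) y = take k p @ drop k p"
      using y(2) \<open>length p = n\<close> \<open>k < n\<close> by (simp add: perm_sum_def)
    then have "p = perm_sum r (take k p) y"
      using False by simp
    moreover have "take k p \<in> perms k"
      using parts(1) sum_split_blocks(1)[OF p split] False by simp
    ultimately show ?thesis
      using y(1) by blast
  next
    case True
    then obtain x where x: "x \<in> perms k" "take k p = map (\<lambda>v. v + (n - k)) x"
      using parts(1) sum_split_blocks(1)[OF p split] permutations_of_set_shift by auto
    have "perm_sum True x (drop k p) = take k p @ drop k p"
      using x(2) \<open>length p = n\<close> by (simp add: perm_sum_def)
    then have "p = perm_sum r x (drop k p)"
      using True by simp
    moreover have "drop k p \<in> perms (n - k)"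
      using parts(2) sum_split_blocks(2)[OF p split] True by simp
    ultimately show ?thesis
      using x(1) by blast
  qed
qed

lemma sum_split_map_strict_mono:
  "strict_mono f \<Longrightarrow> sum_split r (map f xs) k \<longleftrightarrow> sum_split r xs k"
  unfolding sum_split_def by (simp add: less_by_strict_mono)

lemma sum_split_take:
  assumes "sum_split r p k" "j < k"
  shows "sum_split r (take k p) j \<longleftrightarrow> sum_split r p j"
proof
  assume take: "sum_split r (take k p) j"
  show "sum_split r p j"
    unfolding sum_split_def
  proof (intro conjI allI impI)
    show "0 < j" "j < length p" using take assms unfolding sum_split_def by auto
  next
    fix i l assume "i < j" "j \<le> l" "l < length p"
    with take assms show "less_by r (p ! i) (p ! l)"
      unfolding sum_split_def by (cases "l < k") auto
  qed
qed (use assms in \<open>auto simp: sum_split_def\<close>)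

lemma sum_split_perm_sum_below:
  assumes "x \<in> perms m" "y \<in> perms l" "0 < m" "0 < l" "j < m"
  shows "sum_split r (perm_sum r x y) j \<longleftrightarrow> sum_split r x j"
proof -
  have "length x = m"
    using assms(1) by (rule length_perms)
  then have "take m (perm_sum r x y) = map (\<lambda>v. v + of_bool r * length y) x"
    unfolding perm_sum_eq_append by simp
  moreover have "strict_mono (\<lambda>v. v + c)" for c :: nat
    by (simp add: strict_mono_def)
  ultimately show ?thesis
    using sum_split_take[OF sum_split_perm_sum[OF assms(1-4), where r = r] assms(5)]
    by (simp add: sum_split_map_strict_mono)
qed

section \<open>Decomposition at the first split point\<close>

definition decomposable :: "bool \<Rightarrow> nat \<Rightarrow> nat list set" where
  "decomposable r n = {p \<in> avoiders n. \<exists>k. sum_split r p k}"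

definition indecomposable :: "bool \<Rightarrow> nat \<Rightarrow> nat list set" where
  "indecomposable r n = {p \<in> avoiders n. \<nexists>k. sum_split r p k}"

lemma finite_avoiders [simp]: "finite (avoiders n)"
  unfolding avoiders_eq by simp

lemma finite_decomposable [simp]: "finite (decomposable r n)"
  and finite_indecomposable [simp]: "finite (indecomposable r n)"
  unfolding decomposable_def indecomposable_def by simp_all

lemma first_sum_split_perm_sum:
  assumes "x \<in> indecomposable r m" "y \<in> avoiders l" "0 < m" "0 < l"
  shows "(LEAST k. sum_split r (perm_sum r x y) k) = m"
proof (rule Least_equality)
  have perms: "x \<in> perms m" "y \<in> perms l"
    using assms(1,2) unfolding indecomposable_def avoiders_eq by auto
  show "sum_split r (perm_sum r x y) m"
    using sum_split_perm_sum[OF perms assms(3,4)] .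
  show "m \<le> k" if "sum_split r (perm_sum r x y) k" for k
  proof (rule ccontr)
    assume "\<not> m \<le> k"
    then have "sum_split r x k"
      using that sum_split_perm_sum_below[OF perms assms(3,4)] by simp
    with assms(1) show False
      unfolding indecomposable_def by blast
  qed
qed

lemma perm_sum_in_decomposable:
  assumes "x \<in> indecomposable r m" "y \<in> avoiders (n - m)" "m \<in> {1..n-1}"
  shows "perm_sum r x y \<in> decomposable r n"
proof -
  have x: "x \<in> perms m" "avoids_2413_3142 x" and y: "y \<in> perms (n - m)" "avoids_2413_3142 y"
    using assms(1,2) unfolding indecomposable_def avoiders_eq by auto
  have "0 < m" "m < n"
    using assms(3) by auto
  then show ?thesis
    using perm_sum_perms[OF x(1) y(1)] avoids_perm_sum[OF x(1) y(1)]
      sum_split_perm_sum[OF x(1) y(1), where r = r] x(2) y(2)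
    unfolding decomposable_def avoiders_eq by auto
qed

lemma decomposable_split_first:
  assumes "p \<in> decomposable r n"
  obtains k x y where "k \<in> {1..n-1}" "x \<in> indecomposable r k" "y \<in> avoiders (n - k)"
    "p = perm_sum r x y"
proof -
  from assms have p: "p \<in> perms n" "avoids_2413_3142 p" and "\<exists>k. sum_split r p k"
    unfolding decomposable_def avoiders_eq by auto
  define k where "k = (LEAST k. sum_split r p k)"
  have split: "sum_split r p k"
    unfolding k_def using \<open>\<exists>k. sum_split r p k\<close> by (metis LeastI)
  have k: "0 < k" "k < n"
    using split length_perms[OF p(1)] unfolding sum_split_def by auto
  obtain x y where xy: "x \<in> perms k" "y \<in> perms (n - k)" "p = perm_sum r x y"
    using perm_sum_decompose[OF p(1) split] by blast
  have "avoids_2413_3142 x" "avoids_2413_3142 y"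
    using avoids_perm_sum[OF xy(1,2)] xy(3) p(2) k by auto
  moreover have "\<not> sum_split r x j" for j
  proof
    assume "sum_split r x j"
    moreover have "j < k"
      using \<open>sum_split r x j\<close> length_perms[OF xy(1)] unfolding sum_split_def by simp
    ultimately have "sum_split r p j"
      using sum_split_perm_sum_below[OF xy(1,2)] xy(3) k by auto
    with \<open>j < k\<close> show False
      unfolding k_def using not_less_Least by blast
  qed
  ultimately have "x \<in> indecomposable r k" "y \<in> avoiders (n - k)"
    using xy unfolding indecomposable_def avoiders_eq by auto
  moreover have "k \<in> {1..n-1}"
    using k by simp
  ultimately show thesis
    using that xy(3) by blast
qed

lemma bij_betw_perm_sum:
  "bij_betw (\<lambda>(x, y). perm_sum r x y)
     (\<Union>m\<in>{1..n-1}. indecomposable r m \<times> avoiders (n - m)) (decomposable r n)"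
  unfolding bij_betw_def
proof (intro conjI inj_onI subset_antisym subsetI)
  fix a b
  assume "a \<in> (\<Union>m\<in>{1..n-1}. indecomposable r m \<times> avoiders (n - m))"
    and "b \<in> (\<Union>m\<in>{1..n-1}. indecomposable r m \<times> avoiders (n - m))"
  then obtain x y m x' y' m' where a: "a = (x, y)" "m \<in> {1..n-1}"
      "x \<in> indecomposable r m" "y \<in> avoiders (n - m)"
    and b: "b = (x', y')" "m' \<in> {1..n-1}" "x' \<in> indecomposable r m'" "y' \<in> avoiders (n - m')"
    by blast
  assume eq: "(\<lambda>(x, y). perm_sum r x y) a = (\<lambda>(x, y). perm_sum r x y) b"
  then have "m = m'"
    using first_sum_split_perm_sum[OF a(3,4)] first_sum_split_perm_sum[OF b(3,4)] a b by auto
  moreover have "length x = m" "length y = n - m" "length x' = m'" "length y' = n - m'"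
    using a b unfolding indecomposable_def avoiders_eq by (auto simp: length_perms)
  ultimately show "a = b"
    using perm_sum_inj[of x x' y y' r] eq a(1) b(1) by simp
next
  fix p
  assume "p \<in> (\<lambda>(x, y). perm_sum r x y) ` (\<Union>m\<in>{1..n-1}. indecomposable r m \<times> avoiders (n - m))"
  then show "p \<in> decomposable r n"
    using perm_sum_in_decomposable by auto
next
  fix p
  assume "p \<in> decomposable r n"
  then show "p \<in> (\<lambda>(x, y). perm_sum r x y) ` (\<Union>m\<in>{1..n-1}. indecomposable r m \<times> avoiders (n - m))"
    by (rule decomposable_split_first) force
qed

lemma monom_des_perm_sum:
  assumes "x \<in> perms m" "y \<in> perms l" "0 < m" "0 < l"
  shows "monom 1 (des (perm_sum r x y)) = monom 1 (of_bool r) * monom 1 (des x) * monom (1::int) (des y)"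
  using des_perm_sum[OF assms] by (simp add: mult_monom add_ac)

definition des_sum :: "nat list set \<Rightarrow> int poly" where
  "des_sum S = (\<Sum>p\<in>S. monom 1 (des p))"

lemma des_poly_eq_des_sum: "des_poly n = des_sum (avoiders n)"
  unfolding des_poly_def des_sum_def ..

lemma des_sum_decomposable:
  "des_sum (decomposable r n) =
     (\<Sum>m = 1..n-1. monom 1 (of_bool r) * (des_sum (indecomposable r m) * des_sum (avoiders (n - m))))"
proof -
  let ?pairs = "\<lambda>m. indecomposable r m \<times> avoiders (n - m)"
  have lengths: "length x = m" "length y = n - m" if "(x, y) \<in> ?pairs m" for x y m
    using that unfolding indecomposable_def avoiders_eq by (auto simp: length_perms)
  have "des_sum (decomposable r n) = (\<Sum>(x, y) \<in> (\<Union>m\<in>{1..n-1}. ?pairs m). monom 1 (des (perm_sum r x y)))"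
    unfolding des_sum_def using sum.reindex_bij_betw[OF bij_betw_perm_sum, symmetric]
    by (simp add: case_prod_unfold)
  also have "\<dots> = (\<Sum>m = 1..n-1. \<Sum>(x, y) \<in> ?pairs m. monom 1 (des (perm_sum r x y)))"
  proof (rule sum.UNION_disjoint)
    show "\<forall>i\<in>{1..n-1}. \<forall>j\<in>{1..n-1}. i \<noteq> j \<longrightarrow> ?pairs i \<inter> ?pairs j = {}"
    proof (intro ballI impI equals0I)
      fix i j a assume "i \<noteq> j" "a \<in> ?pairs i \<inter> ?pairs j"
      then show False using lengths[of "fst a" "snd a"] by auto
    qed
  qed simp_all
  also have "\<dots> = (\<Sum>m = 1..n-1. \<Sum>(x, y) \<in> ?pairs m. monom 1 (of_bool r) * monom 1 (des x) * monom 1 (des y))"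
    by (intro sum.cong refl)
      (auto simp: monom_des_perm_sum indecomposable_def avoiders_eq)
  also have "\<dots> = (\<Sum>m = 1..n-1. monom 1 (of_bool r) * (des_sum (indecomposable r m) * des_sum (avoiders (n - m))))"
    unfolding des_sum_def sum.cartesian_product[symmetric] sum_product
    unfolding sum_distrib_left mult.assoc ..
  finally show ?thesis .
qed

lemma decomposable_small: "n \<le> 1 \<Longrightarrow> decomposable r n = {}"
  unfolding decomposable_def avoiders_eq sum_split_def by (auto simp: length_perms)

lemma avoiders_1: "avoiders 1 = {[1]}"
proof -
  have "avoids_2413_3142 [1]"
    unfolding avoids_2413_3142_def has_2413_def by auto
  then show ?thesis
    unfolding avoiders_eq by auto
qed

lemma des_poly_1: "des_poly 1 = 1"
  unfolding des_poly_def avoiders_1 by simp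

lemma indecomposable_1: "indecomposable r 1 = {[1]}"
  unfolding indecomposable_def avoiders_1 sum_split_def by auto

lemma decomposable_cases:
  assumes "2 \<le> n" "p \<in> avoiders n"
  shows "p \<in> decomposable r n \<longleftrightarrow> p \<notin> decomposable (\<not> r) n"
proof -
  have "p \<in> perms n" "avoids_2413_3142 p"
    using assms(2) unfolding avoiders_eq by auto
  then obtain s k where "sum_split s p k"
    using avoider_sum_split[of p] assms(1) by (auto simp: length_perms permutations_of_setD(2))
  then have "(\<exists>k. sum_split r p k) \<or> (\<exists>k. sum_split (\<not> r) p k)"
    by (cases "s = r") auto
  moreover have "\<not> ((\<exists>k. sum_split r p k) \<and> (\<exists>k. sum_split (\<not> r) p k))"
    using sum_split_not_both by blast
  ultimately show ?thesis
    using assms(2) unfolding decomposable_def by blast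
qed

lemma indecomposable_eq_decomposable:
  assumes "2 \<le> n"
  shows "indecomposable r n = decomposable (\<not> r) n"
proof (rule set_eqI)
  fix p
  show "p \<in> indecomposable r n \<longleftrightarrow> p \<in> decomposable (\<not> r) n"
    using decomposable_cases[OF assms, of p "\<not> r"]
    unfolding indecomposable_def by (auto simp: decomposable_def)
qed

lemma avoiders_eq_decomposable:
  assumes "2 \<le> n"
  shows "avoiders n = decomposable False n \<union> decomposable True n"
  using decomposable_cases[OF assms, of _ False] by (auto simp: decomposable_def)

section \<open>The generating function\<close>

unbundle fps_syntax

text \<open>The constant coefficient is \<open>0\<close>, not \<open>des_poly 0 = 1\<close> (the empty permutation).\<close>

definition avoider_fps :: "int poly fps" where
  "avoider_fps = Abs_fps (\<lambda>n. if n = 0 then 0 else des_poly n)"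

definition decomposable_fps :: "bool \<Rightarrow> int poly fps" where
  "decomposable_fps r = Abs_fps (\<lambda>n. des_sum (decomposable r n))"

lemma avoider_fps_eq: "avoider_fps = fps_X + decomposable_fps False + decomposable_fps True"
proof (rule fps_ext)
  fix n :: nat
  consider "n = 0" | "n = 1" | "2 \<le> n" by linarith
  then show "avoider_fps $ n = (fps_X + decomposable_fps False + decomposable_fps True) $ n"
  proof cases
    case 1
    then show ?thesis
      by (simp add: avoider_fps_def decomposable_fps_def decomposable_small des_sum_def)
  next
    case 2
    then show ?thesis
      using des_poly_1 by (simp add: avoider_fps_def decomposable_fps_def decomposable_small des_sum_def)
  next
    case 3
    have "decomposable False n \<inter> decomposable True n = {}"
      using decomposable_cases[OF 3, of _ False] by (auto simp: decomposable_def)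
    then have "des_poly n = des_sum (decomposable False n) + des_sum (decomposable True n)"
      unfolding des_poly_eq_des_sum avoiders_eq_decomposable[OF 3] des_sum_def
      by (simp add: sum.union_disjoint)
    with 3 show ?thesis
      by (simp add: avoider_fps_def decomposable_fps_def)
  qed
qed

lemma des_sum_indecomposable:
  assumes "0 < m"
  shows "des_sum (indecomposable r m) = (fps_X + decomposable_fps (\<not> r)) $ m"
proof (cases "m = 1")
  case True
  show ?thesis
    unfolding True indecomposable_1 by (simp add: decomposable_small des_sum_def decomposable_fps_def)
next
  case False
  with assms show ?thesis
    by (simp add: indecomposable_eq_decomposable decomposable_fps_def)
qed

lemma fps_mult_nth_trim:
  fixes f g :: "'a::semiring_0 fps"
  assumes "f $ 0 = 0" "g $ 0 = 0"
  shows "(f * g) $ n = (\<Sum>i = 1..n-1. f $ i * g $ (n - i))"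
  unfolding fps_mult_nth
proof (rule sum.mono_neutral_right)
  show "\<forall>i\<in>{0..n} - {1..n-1}. f $ i * g $ (n - i) = 0"
  proof
    fix i assume "i \<in> {0..n} - {1..n-1}"
    then have "i = 0 \<or> i = n" by auto
    then show "f $ i * g $ (n - i) = 0" using assms by auto
  qed
qed auto

lemma decomposable_fps_eq:
  "decomposable_fps r = fps_const (monom 1 (of_bool r)) * (fps_X + decomposable_fps (\<not> r)) * avoider_fps"
proof (rule fps_ext)
  fix n
  have "(fps_const (monom 1 (of_bool r)) * ((fps_X + decomposable_fps (\<not> r)) * avoider_fps)) $ n =
      monom 1 (of_bool r) * (\<Sum>m = 1..n-1. (fps_X + decomposable_fps (\<not> r)) $ m * avoider_fps $ (n - m))"
    unfolding fps_mult_left_const_nth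
    by (subst fps_mult_nth_trim) (simp_all add: avoider_fps_def decomposable_fps_def decomposable_small des_sum_def)
  also have "\<dots> = des_sum (decomposable r n)"
    unfolding des_sum_decomposable sum_distrib_left
    by (intro sum.cong refl) (auto simp: des_sum_indecomposable avoider_fps_def des_poly_eq_des_sum)
  finally show "decomposable_fps r $ n = (fps_const (monom 1 (of_bool r)) * (fps_X + decomposable_fps (\<not> r)) * avoider_fps) $ n"
    unfolding decomposable_fps_def mult.assoc by simp
qed

lemma avoider_fps_cubic:
  "avoider_fps = fps_X + fps_const [:1, 1:] * (fps_X * avoider_fps) +
     fps_const [:0, 1:] * (fps_X * avoider_fps ^ 2 + avoider_fps ^ 3)"
proof -
  define A D E X T where "A = avoider_fps" and "D = decomposable_fps False"
    and "E = decomposable_fps True" and "X = (fps_X :: int poly fps)" and "T = fps_const [:0, 1 :: int:]"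
  have "[:1, 1 :: int:] = 1 + [:0, 1:]"
    by (simp add: one_pCons)
  then have one_T: "fps_const [:1, 1 :: int:] = 1 + T"
    unfolding T_def by (metis fps_const_add fps_const_1_eq_1)
  have "D = (X + E) * A"
    using decomposable_fps_eq[of False] unfolding A_def D_def E_def X_def by simp
  moreover have "E = T * (X + D) * A"
    using decomposable_fps_eq[of True] unfolding A_def D_def E_def X_def T_def by (simp add: monom_altdef)
  moreover have "A = X + D + E"
    using avoider_fps_eq unfolding A_def D_def E_def X_def by simp
  ultimately have "A = X + fps_const [:1, 1:] * (X * A) + T * (X * A ^ 2 + A ^ 3)"
    unfolding one_T by algebra
  then show ?thesis
    unfolding A_def X_def T_def .
qed

section \<open>The recurrence\<close>

definition conv_sum :: "(nat \<Rightarrow> 'a::comm_semiring_0) \<Rightarrow> nat \<Rightarrow> 'a" where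
  "conv_sum f n = (\<Sum>j = 1..n-2. f j * (f (n - j - 1) + (\<Sum>i = 1..n-j-1. f i * f (n - j - i))))"

lemma conv_sum_cong:
  assumes "\<And>k. 0 < k \<Longrightarrow> k < n \<Longrightarrow> f k = g k"
  shows "conv_sum f n = conv_sum g n"
  unfolding conv_sum_def
proof (rule sum.cong)
  fix j assume j: "j \<in> {1..n-2}"
  have "(\<Sum>i = 1..n-j-1. f i * f (n - j - i)) = (\<Sum>i = 1..n-j-1. g i * g (n - j - i))"
    by (rule sum.cong) (use assms j in auto)
  with assms j show "f j * (f (n - j - 1) + (\<Sum>i = 1..n-j-1. f i * f (n - j - i))) =
      g j * (g (n - j - 1) + (\<Sum>i = 1..n-j-1. g i * g (n - j - i)))"
    by auto
qed simp

lemma conv_sum_fps: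
  fixes F :: "'a::comm_semiring_1 fps"
  assumes "F $ 0 = 0"
  shows "conv_sum (\<lambda>k. F $ k) n = (F ^ 2) $ (n - 1) + (F ^ 3) $ n"
proof -
  have square: "(F ^ 2) $ m = (\<Sum>i = 1..m-1. F $ i * F $ (m - i))" for m
    unfolding power2_eq_square by (intro fps_mult_nth_trim assms)
  have "F ^ 3 = F * F ^ 2"
    by (simp add: power3_eq_cube power2_eq_square mult.assoc)
  then have "(F ^ 3) $ n = (\<Sum>j = 1..n-1. F $ j * (F ^ 2) $ (n - j))"
    using assms by (simp add: fps_mult_nth_trim square)
  also have "\<dots> = (\<Sum>j = 1..n-2. F $ j * (F ^ 2) $ (n - j))"
  proof (rule sum.mono_neutral_right)
    show "\<forall>j\<in>{1..n-1} - {1..n-2}. F $ j * (F ^ 2) $ (n - j) = 0"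
      by (auto simp: square)
  qed auto
  finally show ?thesis
    unfolding conv_sum_def square distrib_left sum.distrib
    by (simp add: diff_commute numeral_2_eq_2)
qed

lemma des_poly_rec:
  assumes "2 \<le> n"
  shows "des_poly n = [:1, 1:] * des_poly (n - 1) + [:0, 1:] * conv_sum des_poly n"
proof -
  have coeff: "avoider_fps $ k = des_poly k" if "0 < k" for k
    using that by (simp add: avoider_fps_def)
  have "conv_sum des_poly n = conv_sum (\<lambda>k. avoider_fps $ k) n"
    by (rule conv_sum_cong) (simp add: coeff)
  also have "\<dots> = (avoider_fps ^ 2) $ (n - 1) + (avoider_fps ^ 3) $ n"
    by (rule conv_sum_fps) (simp add: avoider_fps_def)
  finally have conv: "conv_sum des_poly n = (avoider_fps ^ 2) $ (n - 1) + (avoider_fps ^ 3) $ n" .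
  have "des_poly n = avoider_fps $ n"
    using assms by (simp add: coeff)
  also have "\<dots> = (fps_X + fps_const [:1, 1:] * (fps_X * avoider_fps) +
      fps_const [:0, 1:] * (fps_X * avoider_fps ^ 2 + avoider_fps ^ 3)) $ n"
    by (subst avoider_fps_cubic) (rule refl)
  also have "\<dots> = [:1, 1:] * des_poly (n - 1) + [:0, 1:] * conv_sum des_poly n"
    using assms by (simp add: conv coeff)
  finally show ?thesis .
qed

fun gamma_poly :: "nat \<Rightarrow> int poly" where
  "gamma_poly n = (if n \<le> 1 then of_bool (n = 1) else
     gamma_poly (n - 1) + [:0, 1:] * (\<Sum>j = 1..n-2. gamma_poly j *
       (gamma_poly (n - j - 1) + (\<Sum>i = 1..n-j-1. gamma_poly i * gamma_poly (n - j - i)))))"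

declare gamma_poly.simps [simp del]

lemma gamma_poly_1: "gamma_poly 1 = 1"
  by (simp add: gamma_poly.simps)

lemma gamma_poly_rec: "2 \<le> n \<Longrightarrow> gamma_poly n = gamma_poly (n - 1) + [:0, 1:] * conv_sum gamma_poly n"
  by (subst gamma_poly.simps) (simp add: conv_sum_def)

lemma degree_self_convolution_le:
  fixes f :: "nat \<Rightarrow> 'a::comm_semiring_1 poly"
  assumes deg: "\<And>k. 0 < k \<Longrightarrow> k < m \<Longrightarrow> degree (f k) \<le> (k - 1) div 2"
  shows "degree (\<Sum>i = 1..m-1. f i * f (m - i)) \<le> (m - 2) div 2"
proof (rule degree_sum_le)
  fix i assume i: "i \<in> {1..m-1}"
  have "degree (f i * f (m - i)) \<le> (i - 1) div 2 + (m - i - 1) div 2"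
    using degree_mult_le[of "f i" "f (m - i)"] deg[of i] deg[of "m - i"] i by force
  also have "\<dots> \<le> (i - 1 + (m - i - 1)) div 2"
    by presburger
  also have "i - 1 + (m - i - 1) = m - 2"
    using i by auto
  finally show "degree (f i * f (m - i)) \<le> (m - 2) div 2" .
qed simp

lemma degree_X_mult_conv_sum:
  fixes f :: "nat \<Rightarrow> 'a::comm_semiring_1 poly"
  assumes deg: "\<And>k. 0 < k \<Longrightarrow> k < n \<Longrightarrow> degree (f k) \<le> (k - 1) div 2"
  shows "degree ([:0, 1:] * conv_sum f n) \<le> (n - 1) div 2"
proof (cases "n \<le> 2")
  case True
  then show ?thesis by (simp add: conv_sum_def)
next
  case False
  have "degree (conv_sum f n) \<le> (n - 3) div 2"
    unfolding conv_sum_def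
  proof (rule degree_sum_le)
    fix j assume j: "j \<in> {1..n-2}"
    have "degree (\<Sum>i = 1..n-j-1. f i * f (n - j - i)) \<le> (n - j - 2) div 2"
      using degree_self_convolution_le[of "n - j" f] deg by (simp add: diff_commute)
    moreover have "Suc j < n"
      using j False by auto
    then have "degree (f (n - j - 1)) \<le> (n - j - 2) div 2"
      using deg[of "n - j - 1"] by (simp add: diff_commute)
    ultimately have "degree (f (n - j - 1) + (\<Sum>i = 1..n-j-1. f i * f (n - j - i))) \<le> (n - j - 2) div 2"
      by (intro degree_add_le)
    moreover have "degree (f j) \<le> (j - 1) div 2"
      using deg[of j] j False by auto
    ultimately have "degree (f j * (f (n - j - 1) + (\<Sum>i = 1..n-j-1. f i * f (n - j - i)))) \<le>
        (j - 1) div 2 + (n - j - 2) div 2"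
      by (intro order_trans[OF degree_mult_le] add_mono) simp_all
    also have "\<dots> \<le> (j - 1 + (n - j - 2)) div 2"
      by presburger
    also have "j - 1 + (n - j - 2) = n - 3"
      using j False by auto
    finally show "degree (f j * (f (n - j - 1) + (\<Sum>i = 1..n-j-1. f i * f (n - j - i)))) \<le> (n - 3) div 2" .
  qed simp
  then have "degree ([:0, 1:] * conv_sum f n) \<le> 1 + (n - 3) div 2"
    using degree_mult_le[of "[:0, 1:]" "conv_sum f n"] by simp
  also have "\<dots> = (n - 1) div 2"
    using False by presburger
  finally show ?thesis .
qed

lemma degree_gamma_poly: "degree (gamma_poly n) \<le> (n - 1) div 2"
proof (induction n rule: less_induct)
  case (less n)
  show ?case
  proof (cases "n \<le> 1")
    case True
    then show ?thesis by (simp add: gamma_poly.simps)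
  next
    case False
    then have "degree (gamma_poly (n - 1)) \<le> (n - 1) div 2"
      using less.IH[of "n - 1"] div_le_mono[of "n - 1 - 1" "n - 1" 2] by simp
    moreover have "degree ([:0, 1:] * conv_sum gamma_poly n) \<le> (n - 1) div 2"
      by (rule degree_X_mult_conv_sum) (use less.IH in auto)
    ultimately show ?thesis
      using False gamma_poly_rec[of n] by (simp add: degree_add_le)
  qed
qed

section \<open>The gamma-expansion\<close>

definition eval_real :: "int poly \<Rightarrow> real \<Rightarrow> real" where
  "eval_real p t = poly (map_poly of_int p) t"

lemma map_poly_of_int_add: "map_poly of_int (p + q) = map_poly of_int p + map_poly of_int q"
  by (rule poly_eqI) (simp add: coeff_map_poly)

lemma map_poly_of_int_diff: "map_poly of_int (p - q) = map_poly of_int p - map_poly of_int q"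
  by (rule poly_eqI) (simp add: coeff_map_poly)

lemma map_poly_of_int_mult:
  "map_poly (of_int :: int \<Rightarrow> 'a::comm_ring_1) (p * q) = map_poly of_int p * map_poly of_int q"
  by (rule poly_eqI) (simp add: coeff_map_poly coeff_mult)

lemma eval_real_add [simp]: "eval_real (p + q) t = eval_real p t + eval_real q t"
  unfolding eval_real_def map_poly_of_int_add by simp

lemma eval_real_mult [simp]: "eval_real (p * q) t = eval_real p t * eval_real q t"
  unfolding eval_real_def map_poly_of_int_mult by simp

lemma eval_real_0 [simp]: "eval_real 0 t = 0"
  and eval_real_1 [simp]: "eval_real 1 t = 1"
  unfolding eval_real_def by simp_all

lemma eval_real_sum [simp]: "eval_real (sum f S) t = (\<Sum>x\<in>S. eval_real (f x) t)"
  by (induction S rule: infinite_finite_induct) simp_all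

lemma eval_real_power [simp]: "eval_real (p ^ k) t = eval_real p t ^ k"
  by (induction k) simp_all

lemma eval_real_monom [simp]: "eval_real (monom c k) t = of_int c * t ^ k"
  unfolding eval_real_def by (simp add: map_poly_monom poly_monom)

lemma eval_real_pCons [simp]: "eval_real [:a, b:] t = of_int a + of_int b * t"
  unfolding eval_real_def by (simp add: map_poly_pCons)

lemma eval_real_smult [simp]: "eval_real (smult c p) t = of_int c * eval_real p t"
  unfolding eval_real_def by (simp add: map_poly_smult)

lemma eval_real_conv_sum: "eval_real (conv_sum f n) t = conv_sum (\<lambda>k. eval_real (f k) t) n"
  unfolding conv_sum_def by simp

lemma poly_eq_by_eval_real:
  assumes "infinite S" "\<And>t. t \<in> S \<Longrightarrow> eval_real p t = eval_real q t"
  shows "p = q"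
proof (rule ccontr)
  assume "p \<noteq> q"
  then have "map_poly (of_int :: int \<Rightarrow> real) (p - q) \<noteq> 0"
    by (simp add: map_poly_eq_0_iff)
  then have "finite {t. poly (map_poly (of_int :: int \<Rightarrow> real) (p - q)) t = 0}"
    by (rule poly_roots_finite)
  moreover have "S \<subseteq> {t. poly (map_poly (of_int :: int \<Rightarrow> real) (p - q)) t = 0}"
    using assms(2) by (auto simp: eval_real_def map_poly_of_int_diff)
  ultimately show False
    using assms(1) finite_subset by blast
qed

text \<open>Substituting \<open>x = t / (1 + t)^2\<close> turns \<open>t^k (1 + t)^(n-1-2k)\<close> into \<open>(1 + t)^(n-1) x^k\<close>.\<close>

definition gamma_arg :: "real \<Rightarrow> real" where
  "gamma_arg t = t / (1 + t) ^ 2"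

lemma inj_on_gamma_arg: "inj_on gamma_arg {0..<1}"
proof (rule inj_onI)
  fix a b :: real assume ab: "a \<in> {0..<1}" "b \<in> {0..<1}" "gamma_arg a = gamma_arg b"
  then have "a * (1 + b) ^ 2 = b * (1 + a) ^ 2"
    unfolding gamma_arg_def by (simp add: field_simps)
  then have "(a - b) * (1 - a * b) = 0"
    by (simp add: algebra_simps power2_eq_square)
  moreover have "a * b \<le> a"
    using ab by (simp add: mult_left_le)
  then have "a * b < 1"
    using ab by simp
  ultimately show "a = b" by simp
qed

lemma infinite_gamma_arg_image: "infinite (gamma_arg ` {0..<1})"
  using finite_imageD[OF _ inj_on_gamma_arg] infinite_Ico[of "0::real" 1] by auto

lemma power_mult_power_eq: "a + b = c \<Longrightarrow> q ^ a * q ^ b = (q :: 'a::monoid_mult) ^ c"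
  by (simp flip: power_add)

lemma self_convolution_scale:
  fixes f g :: "nat \<Rightarrow> 'a::comm_semiring_1"
  assumes scale: "\<And>k. 0 < k \<Longrightarrow> k < m \<Longrightarrow> f k = q ^ (k - 1) * g k"
  shows "(\<Sum>i = 1..m-1. f i * f (m - i)) = q ^ (m - 2) * (\<Sum>i = 1..m-1. g i * g (m - i))"
  unfolding sum_distrib_left
proof (rule sum.cong[OF refl])
  fix i assume "i \<in> {1..m-1}"
  then have i: "0 < i" "i < m" "0 < m - i" "m - i < m"
    by auto
  then have "f i * f (m - i) = (q ^ (i - 1) * q ^ (m - i - 1)) * (g i * g (m - i))"
    using scale[of i] scale[of "m - i"] by (simp add: mult_ac)
  also have "q ^ (i - 1) * q ^ (m - i - 1) = q ^ (m - 2)"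
    using i by (intro power_mult_power_eq) auto
  finally show "f i * f (m - i) = q ^ (m - 2) * (g i * g (m - i))" .
qed

lemma conv_sum_scale:
  fixes f g :: "nat \<Rightarrow> 'a::comm_semiring_1"
  assumes scale: "\<And>k. 0 < k \<Longrightarrow> k < n \<Longrightarrow> f k = q ^ (k - 1) * g k"
  shows "q ^ 2 * conv_sum f n = q ^ (n - 1) * conv_sum g n"
proof (cases "n \<le> 2")
  case True
  then show ?thesis by (simp add: conv_sum_def)
next
  case False
  have "conv_sum f n = q ^ (n - 3) * conv_sum g n"
    unfolding conv_sum_def sum_distrib_left
  proof (rule sum.cong[OF refl])
    fix j assume j: "j \<in> {1..n-2}"
    have "(\<Sum>i = 1..n-j-1. f i * f (n - j - i)) = q ^ (n - j - 2) * (\<Sum>i = 1..n-j-1. g i * g (n - j - i))"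
      using self_convolution_scale[of "n - j" f q g] scale by (simp add: diff_commute)
    moreover have "f j = q ^ (j - 1) * g j" "f (n - j - 1) = q ^ (n - j - 2) * g (n - j - 1)"
      using scale[of j] scale[of "n - j - 1"] j False by (auto simp: diff_commute)
    moreover have "q ^ (j - 1) * q ^ (n - j - 2) = q ^ (n - 3)"
      using j False by (intro power_mult_power_eq) auto
    ultimately show "f j * (f (n - j - 1) + (\<Sum>i = 1..n-j-1. f i * f (n - j - i))) =
        q ^ (n - 3) * (g j * (g (n - j - 1) + (\<Sum>i = 1..n-j-1. g i * g (n - j - i))))"
      by (simp add: algebra_simps flip: \<open>q ^ (j - 1) * q ^ (n - j - 2) = q ^ (n - 3)\<close>)
  qed
  moreover have "q ^ 2 * q ^ (n - 3) = q ^ (n - 1)"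
    using False by (intro power_mult_power_eq) auto
  ultimately show ?thesis
    by (simp flip: mult.assoc)
qed

lemma eval_real_des_poly:
  assumes "0 < n" "0 \<le> t"
  shows "eval_real (des_poly n) t = (1 + t) ^ (n - 1) * eval_real (gamma_poly n) (gamma_arg t)"
  using assms(1)
proof (induction n rule: less_induct)
  case (less n)
  show ?case
  proof (cases "n = 1")
    case True
    show ?thesis
      unfolding True des_poly_1 gamma_poly_1 by simp
  next
    case False
    with less.prems have n: "2 \<le> n" by simp
    define q x where "q = 1 + t" and "x = gamma_arg t"
    have "0 < q"
      using assms(2) unfolding q_def by simp
    then have t: "t = x * q ^ 2"
      unfolding x_def q_def gamma_arg_def by simp
    have IH: "eval_real (des_poly k) t = q ^ (k - 1) * eval_real (gamma_poly k) x" if "0 < k" "k < n" for k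
      using less.IH[OF that(2,1)] unfolding q_def x_def .
    have "n - 1 = Suc (n - 2)"
      using n by simp
    then have q_pow: "q ^ (n - 1) = q * q ^ (n - 2)"
      by simp
    have t_mult: "t * c = x * (q ^ 2 * c)" for c
      by (subst t) (simp add: mult.assoc)
    have scale: "q ^ 2 * conv_sum (\<lambda>k. eval_real (des_poly k) t) n =
        q ^ (n - 1) * conv_sum (\<lambda>k. eval_real (gamma_poly k) x) n"
      by (rule conv_sum_scale) (rule IH)
    have "eval_real (des_poly n) t =
        q * eval_real (des_poly (n - 1)) t + t * conv_sum (\<lambda>k. eval_real (des_poly k) t) n"
      unfolding des_poly_rec[OF n] eval_real_add eval_real_mult eval_real_pCons eval_real_conv_sum
      by (simp add: q_def)
    also have "\<dots> = q * (q ^ (n - 2) * eval_real (gamma_poly (n - 1)) x) +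
        x * (q ^ (n - 1) * conv_sum (\<lambda>k. eval_real (gamma_poly k) x) n)"
      unfolding t_mult unfolding scale
      using IH[of "n - 1"] n by (simp add: numeral_2_eq_2)
    also have "\<dots> = q ^ (n - 1) *
        (eval_real (gamma_poly (n - 1)) x + x * conv_sum (\<lambda>k. eval_real (gamma_poly k) x) n)"
      unfolding q_pow by (simp add: algebra_simps)
    also have "\<dots> = q ^ (n - 1) * eval_real (gamma_poly n) x"
      unfolding gamma_poly_rec[OF n] eval_real_add eval_real_mult eval_real_pCons eval_real_conv_sum
      by simp
    finally show ?thesis
      unfolding q_def x_def .
  qed
qed

lemma eval_real_gamma_expansion:
  assumes "0 \<le> t"
  shows "eval_real (\<Sum>k\<le>(n - 1) div 2. smult (c k) ([:0, 1:] ^ k * [:1, 1:] ^ (n - 1 - 2 * k))) t =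
    (1 + t) ^ (n - 1) * eval_real (\<Sum>k\<le>(n - 1) div 2. monom (c k) k) (gamma_arg t)"
proof -
  have "t ^ k * (1 + t) ^ (n - 1 - 2 * k) = (1 + t) ^ (n - 1) * gamma_arg t ^ k"
    if "k \<le> (n - 1) div 2" for k
  proof -
    have "n - 1 = (n - 1 - 2 * k) + 2 * k"
      using that by auto
    then have "(1 + t) ^ (n - 1) = (1 + t) ^ (n - 1 - 2 * k) * ((1 + t) ^ 2) ^ k"
      unfolding power_mult[symmetric] power_add[symmetric] by simp
    moreover have "gamma_arg t ^ k * ((1 + t) ^ 2) ^ k = t ^ k"
      using assms unfolding gamma_arg_def by (simp flip: power_mult_distrib)
    ultimately show ?thesis
      by (simp add: algebra_simps)
  qed
  then show ?thesis
    by (simp add: sum_distrib_left algebra_simps)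
qed

lemma gamma_expansion_iff:
  assumes "0 < n"
  shows "des_poly n = (\<Sum>k\<le>(n - 1) div 2. smult (c k) ([:0, 1:] ^ k * [:1, 1:] ^ (n - 1 - 2 * k))) \<longleftrightarrow>
    (\<Sum>k\<le>(n - 1) div 2. monom (c k) k) = gamma_poly n"
    (is "des_poly n = ?expansion \<longleftrightarrow> ?gamma = gamma_poly n")
proof -
  have eval: "eval_real (des_poly n) t = eval_real ?expansion t \<longleftrightarrow>
      eval_real ?gamma (gamma_arg t) = eval_real (gamma_poly n) (gamma_arg t)" if "t \<in> {0..<1}" for t
    using that eval_real_des_poly[OF assms, of t] eval_real_gamma_expansion[where n = n and c = c, of t]
    by auto
  show ?thesis
  proof
    assume "des_poly n = ?expansion"
    then show "?gamma = gamma_poly n"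
      using eval by (intro poly_eq_by_eval_real[OF infinite_gamma_arg_image]) auto
  next
    assume "?gamma = gamma_poly n"
    then show "des_poly n = ?expansion"
      using eval by (intro poly_eq_by_eval_real[of "{0..<1}"]) auto
  qed
qed

lemma is_gamma_coeffs_iff: "is_gamma_coeffs g \<longleftrightarrow> (\<forall>n\<ge>1. Gamma g n = gamma_poly n)"
  unfolding is_gamma_coeffs_def Gamma_def using gamma_expansion_iff by auto

theorem corollary5p11:
  shows "(\<exists>g. is_gamma_coeffs g) \<and>
    (\<forall>g. is_gamma_coeffs g \<longrightarrow>
       Gamma g 1 = 1 \<and>
       (\<forall>n\<ge>2. Gamma g n = Gamma g (n - 1) +
          [:0, 1:] * (\<Sum>j=1..n-2. Gamma g j *
             (Gamma g (n - j - 1) + (\<Sum>i=1..n-j-1. Gamma g i * Gamma g (n - j - i))))))"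
proof (intro conjI allI impI)
  have "Gamma (\<lambda>n k. coeff (gamma_poly n) k) n = gamma_poly n" for n
    unfolding Gamma_def by (rule poly_as_sum_of_monoms'[OF degree_gamma_poly])
  then show "\<exists>g. is_gamma_coeffs g"
    unfolding is_gamma_coeffs_iff by blast
next
  fix g assume "is_gamma_coeffs g"
  then have Gamma: "Gamma g k = gamma_poly k" if "0 < k" for k
    using that by (simp add: is_gamma_coeffs_iff)
  show "Gamma g 1 = 1"
    using Gamma[of 1] gamma_poly_1 by simp
  fix n :: nat assume n: "2 \<le> n"
  have "conv_sum (Gamma g) n = conv_sum gamma_poly n"
    by (rule conv_sum_cong) (simp add: Gamma)
  then have "Gamma g n = Gamma g (n - 1) + [:0, 1:] * conv_sum (Gamma g) n"
    using Gamma[of n] Gamma[of "n - 1"] gamma_poly_rec[OF n] n by simp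
  then show "Gamma g n = Gamma g (n - 1) + [:0, 1:] * (\<Sum>j=1..n-2. Gamma g j *
      (Gamma g (n - j - 1) + (\<Sum>i=1..n-j-1. Gamma g i * Gamma g (n - j - i))))"
    unfolding conv_sum_def .
qed

end
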